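(* Let $G$ be a finite Abelian group, let $\hat G$ be its set of irreducible (one-dimensional) representations (characters) $\mu:G\to\mathbb{C}$, and let $g\mapsto U_g$ be a unitary representation of $G$ on a Hilbert space $\mathcal{H}$ having an orthonormal basis $\{|v_\mu\rangle\}_{\mu\in\hat G}$ with $U_g|v_\mu\rangle=\mu(g)|v_\mu\rangle$ for all $g\in G$, $\mu\in\hat G$. Let $|\psi\rangle=\sum_{\mu\in\hat G}a_\mu|v_\mu\rangle$ be a unit vector, and let $\mu_0\in\hat G$ satisfy $|a_{\mu_0}|\ge|a_\mu|$ for all $\mu\in\hat G$. Then conclusive single-state exclusion of the set $\{U_g|\psi\rangle: g\in G\}$ can be done, i.e., there exists a POVM $\{M_g\}_{g\in G}$ on $\mathcal{H}$ with $\langle\psi|U_g^\dagger M_gU_g|\psi\rangle=0$ for all $g\in G$, if and only if $$|a_{\mu_0}|\le\sum_{\mu\in\hat G,\ \mu\neq\mu_0}|a_\mu|.$$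
   Context: A POVM $\{M_g\}_{g\in G}$ on $\mathcal{H}$ is a family of positive semidefinite operators with $\sum_{g\in G}M_g=I_{\mathcal{H}}$. Conclusive single-state exclusion of $\{|u_g\rangle\}_{g\in G}$ means the existence of a POVM with $\operatorname{tr}[M_g|u_g\rangle\langle u_g|]=0$ for all $g$. *)

theory Defs
  imports "HOL-Algebra.Group" Complex_Main
begin

text \<open>Characters (one-dimensional irreducible unitary representations) of a group G,
  taken extensional outside the carrier so that the set of characters is finite.\<close>
definition characters :: "('g, 'b) monoid_scheme \<Rightarrow> ('g \<Rightarrow> complex) set" where
  "characters G = {\<mu>. (\<forall>x\<in>carrier G. cmod (\<mu> x) = 1)
                     \<and> (\<forall>x\<in>carrier G. \<forall>y\<in>carrier G. \<mu> (x \<otimes>\<^bsub>G\<^esub> y) = \<mu> x * \<mu> y)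
                     \<and> (\<forall>x. x \<notin> carrier G \<longrightarrow> \<mu> x = 0)}"

text \<open>The Hilbert space H is identified with complex functions on the index set I
  (coordinates w.r.t. the orthonormal basis v_mu); operators are I x I matrices.\<close>
definition qform :: "'i set \<Rightarrow> ('i \<Rightarrow> complex) \<Rightarrow> ('i \<Rightarrow> 'i \<Rightarrow> complex) \<Rightarrow> complex" where
  "qform I x M = (\<Sum>i\<in>I. \<Sum>j\<in>I. cnj (x i) * M i j * x j)"

definition psd :: "'i set \<Rightarrow> ('i \<Rightarrow> 'i \<Rightarrow> complex) \<Rightarrow> bool" where
  "psd I M \<longleftrightarrow> (\<forall>x. Im (qform I x M) = 0 \<and> Re (qform I x M) \<ge> 0)"

definition is_POVM :: "'i set \<Rightarrow> 'g set \<Rightarrow> ('g \<Rightarrow> 'i \<Rightarrow> 'i \<Rightarrow> complex) \<Rightarrow> bool" where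
  "is_POVM I A M \<longleftrightarrow> (\<forall>g\<in>A. psd I (M g))
      \<and> (\<forall>i\<in>I. \<forall>j\<in>I. (\<Sum>g\<in>A. M g i j) = (if i = j then 1 else 0))"

definition rep_act :: "'g \<Rightarrow> (('g \<Rightarrow> complex) \<Rightarrow> complex) \<Rightarrow> (('g \<Rightarrow> complex) \<Rightarrow> complex)" where
  "rep_act g a = (\<lambda>\<mu>. \<mu> g * a \<mu>)"

end

(*
  Necessity: twirling a POVM that excludes every U_g psi gives the positive operator
  N = \<Sum>_g U_g^* M_g U_g, which has unit diagonal in the eigenbasis v_mu (so all its
  entries have modulus at most 1) and satisfies <psi|N|psi> = 0, hence N psi = 0.
  The mu0-th coordinate of N psi = 0 reads a_mu0 = - \<Sum>_{mu ~= mu0} N_{mu0 mu} a_mu.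

  Sufficiency: if |a_mu0| is at most the sum of the other |a_mu|, these moduli are the
  side lengths of a closed polygon: after splitting the other sides into two groups of
  total lengths P and Q with |P - Q| <= |a_mu0| <= P + Q, a triangle closes it. This gives
  unit phases phi_mu with \<Sum>_mu conj(a_mu) phi_mu = 0, and M_g = |U_g phi><U_g phi| / |G|
  is a POVM by orthogonality of characters, with <U_g psi|U_g phi> = <psi|phi> = 0.
*)
theory Submission
  imports Defs
begin

lemma cnj_mult_sgn: "cnj z * sgn z = of_real (cmod z)"
proof (cases "z = 0")
  case False
  then show ?thesis
    by (simp add: sgn_eq power2_eq_square field_simps flip: complex_norm_square)
qed simp

lemma exists_unit_phase: "\<exists>u. cmod u = 1 \<and> cnj z * u = of_real (cmod z)"
proof (cases "z = 0")
  case False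
  then show ?thesis
    by (intro exI[of _ "sgn z"]) (simp add: norm_sgn cnj_mult_sgn)
next
  case True
  then show ?thesis
    by (intro exI[of _ 1]) simp
qed

lemma cnj_mult_self_eq_1: "cmod z = 1 \<Longrightarrow> cnj z * z = 1"
  by (simp add: mult.commute flip: complex_norm_square)

lemma qform_cong_support:
  assumes "finite I" "S \<subseteq> I" "\<forall>k\<in>I - S. x k = 0"
  shows "qform I x N = qform S x N"
proof -
  have "(\<Sum>j\<in>I. cnj (x i) * N i j * x j) = (\<Sum>j\<in>S. cnj (x i) * N i j * x j)" for i
    by (rule sum.mono_neutral_right) (use assms in auto)
  then have "qform I x N = (\<Sum>i\<in>I. \<Sum>j\<in>S. cnj (x i) * N i j * x j)"
    by (simp add: qform_def)
  also have "\<dots> = qform S x N"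
    unfolding qform_def by (rule sum.mono_neutral_right) (use assms in auto)
  finally show ?thesis .
qed

lemma qform_single_point:
  assumes "finite I" "i \<in> I"
  shows "qform I (\<lambda>k. if k = i then s else 0) N = cnj s * N i i * s"
  using qform_cong_support[OF assms(1), of "{i}"] assms(2) by (simp add: qform_def)

lemma qform_two_points:
  assumes "finite I" "i \<in> I" "j \<in> I" "i \<noteq> j"
  shows "qform I (\<lambda>k. if k = i then s else if k = j then t else 0) N
     = cnj s * N i i * s + cnj s * N i j * t + cnj t * N j i * s + cnj t * N j j * t"
proof -
  have "qform I (\<lambda>k. if k = i then s else if k = j then t else 0) N
      = qform {i, j} (\<lambda>k. if k = i then s else if k = j then t else 0) N"
    by (rule qform_cong_support) (use assms in auto)
  also have "\<dots> = cnj s * N i i * s + cnj s * N i j * t + cnj t * N j i * s + cnj t * N j j * t"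
    using assms(4) by (simp add: qform_def algebra_simps)
  finally show ?thesis .
qed

lemma qform_add_point:
  assumes "finite I" "i \<in> I"
  shows "qform I (\<lambda>k. x k + (if k = i then t else 0)) N
    = qform I x N + cnj t * (\<Sum>j\<in>I. N i j * x j) + t * (\<Sum>k\<in>I. cnj (x k) * N k i)
      + cnj t * N i i * t"
proof -
  have sum_if_const: "(\<Sum>j\<in>I. if P then f j else 0) = (if P then sum f I else 0)"
    for P and f :: "'a \<Rightarrow> complex"
    by simp
  have "qform I (\<lambda>k. x k + (if k = i then t else 0)) N
      = (\<Sum>k\<in>I. \<Sum>j\<in>I. cnj (x k) * N k j * x j
          + (if j = i then cnj (x k) * N k i * t else 0)
          + (if k = i then cnj t * N i j * x j else 0)
          + (if k = i then if j = i then cnj t * N i i * t else 0 else 0))"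
    unfolding qform_def by (intro sum.cong refl) (auto simp: algebra_simps)
  also have "\<dots> = qform I x N + (\<Sum>k\<in>I. cnj (x k) * N k i * t)
        + (\<Sum>j\<in>I. cnj t * N i j * x j) + cnj t * N i i * t"
    using assms by (simp add: qform_def sum.distrib sum_if_const)
  finally show ?thesis
    by (simp add: sum_distrib_left mult_ac)
qed

lemma psd_diag:
  assumes "psd I N" "finite I" "i \<in> I"
  shows "N i i = of_real (Re (N i i))" "Re (N i i) \<ge> 0"
proof -
  have "qform I (\<lambda>k. if k = i then 1 else 0) N = N i i"
    using qform_single_point[OF assms(2,3)] by simp
  then have "Im (N i i) = 0" "Re (N i i) \<ge> 0"
    using assms(1) unfolding psd_def by metis+
  then show "N i i = of_real (Re (N i i))" "Re (N i i) \<ge> 0"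
    by (simp_all add: complex_eq_iff)
qed

lemma psd_hermitian:
  assumes "psd I N" "finite I" "i \<in> I" "j \<in> I"
  shows "N j i = cnj (N i j)"
proof (cases "i = j")
  case True
  then show ?thesis
    using psd_diag(1)[OF assms(1-3)] by (metis complex_cnj_complex_of_real)
next
  case False
  have diag: "Im (N i i) = 0" "Im (N j j) = 0"
    using psd_diag(1)[OF assms(1,2)] assms(3,4) by (metis Im_complex_of_real)+
  have "Im (qform I (\<lambda>k. if k = i then 1 else if k = j then 1 else 0) N) = 0"
    "Im (qform I (\<lambda>k. if k = i then 1 else if k = j then \<i> else 0) N) = 0"
    using assms(1) unfolding psd_def by blast+
  then have "Im (N i j + N j i) = 0" "Re (N i j - N j i) = 0"
    using qform_two_points[OF assms(2-4) False] diag by (simp_all add: algebra_simps)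
  then show ?thesis
    by (simp add: complex_eq_iff)
qed

lemma psd_unit_diag_cmod_le_1:
  assumes "psd I N" "finite I" "i \<in> I" "j \<in> I" "N i i = 1" "N j j = 1"
  shows "cmod (N i j) \<le> 1"
proof (cases "i = j \<or> N i j = 0")
  case True
  then show ?thesis
    using assms(5) by auto
next
  case False
  define t where "t = - cnj (sgn (N i j))"
  have "cnj t * t = 1"
    using False by (simp add: t_def norm_sgn flip: complex_norm_square)
  moreover have Nt: "N i j * t = - of_real (cmod (N i j))"
    using arg_cong[OF cnj_mult_sgn[of "N i j"], of cnj] by (simp add: t_def mult.commute)
  moreover have "cnj t * N j i = - of_real (cmod (N i j))"
    using arg_cong[OF Nt, of cnj] psd_hermitian[OF assms(1-4)] by (simp add: mult.commute)
  ultimately have "qform I (\<lambda>k. if k = i then 1 else if k = j then t else 0) N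
      = 2 - 2 * of_real (cmod (N i j))"
    using qform_two_points[OF assms(2-4), of 1 t N] False assms(5,6) by simp
  moreover have "Re (qform I (\<lambda>k. if k = i then 1 else if k = j then t else 0) N) \<ge> 0"
    using assms(1) unfolding psd_def by blast
  ultimately show ?thesis
    by simp
qed

lemma psd_qform_eq_0_imp_mult_eq_0:
  assumes "psd I N" "finite I" "i \<in> I" "qform I x N = 0"
  shows "(\<Sum>j\<in>I. N i j * x j) = 0"
proof -
  define \<alpha> where "\<alpha> = (\<Sum>j\<in>I. N i j * x j)"
  define d where "d = Re (N i i)"
  have d: "N i i = of_real d" "d \<ge> 0"
    using psd_diag[OF assms(1-3)] by (simp_all add: d_def)
  have column: "(\<Sum>k\<in>I. cnj (x k) * N k i) = cnj \<alpha>"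
    using psd_hermitian[OF assms(1,2,3)] by (simp add: \<alpha>_def mult.commute)
  \<comment> \<open>Moving x by -c\<alpha> in direction i, with c = 1/(1+d), makes the form negative
    unless \<alpha> = 0.\<close>
  define c where "c = 1 / (1 + d)"
  define t where "t = - of_real c * \<alpha>"
  have c: "c > 0" "c * d < 1"
    using d(2) by (simp_all add: c_def field_simps)
  have "qform I (\<lambda>k. x k + (if k = i then t else 0)) N
      = cnj t * \<alpha> + t * cnj \<alpha> + cnj t * of_real d * t"
    using qform_add_point[OF assms(2,3), of x t N] assms(4) d(1) column by (simp add: \<alpha>_def)
  also have "\<dots> = (\<alpha> * cnj \<alpha>) * of_real (c * (c * d - 2))"
    by (simp add: t_def algebra_simps)
  also have "\<dots> = of_real (c * (cmod \<alpha>)\<^sup>2 * (c * d - 2))"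
    by (simp only: complex_norm_square [symmetric] of_real_mult [symmetric] mult_ac)
  finally have "Re (qform I (\<lambda>k. x k + (if k = i then t else 0)) N)
      = c * (cmod \<alpha>)\<^sup>2 * (c * d - 2)"
    by simp
  moreover have "Re (qform I (\<lambda>k. x k + (if k = i then t else 0)) N) \<ge> 0"
    using assms(1) unfolding psd_def by blast
  ultimately have "(cmod \<alpha>)\<^sup>2 \<le> 0"
    using c by (smt (verit) mult_pos_pos mult_pos_neg zero_less_power2)
  then show ?thesis
    by (simp add: \<alpha>_def)
qed

lemma qform_rep_act:
  "qform I (rep_act g x) N = qform I x (\<lambda>\<mu> \<nu>. cnj (\<mu> g) * N \<mu> \<nu> * \<nu> g)"
  unfolding qform_def rep_act_def by (intro sum.cong refl) (simp add: mult_ac)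

lemma qform_sum:
  "(\<Sum>g\<in>A. qform I x (N g)) = qform I x (\<lambda>i j. \<Sum>g\<in>A. N g i j)"
proof -
  have "(\<Sum>g\<in>A. qform I x (N g)) = (\<Sum>i\<in>I. \<Sum>g\<in>A. \<Sum>j\<in>I. cnj (x i) * N g i j * x j)"
    unfolding qform_def by (rule sum.swap)
  also have "\<dots> = (\<Sum>i\<in>I. \<Sum>j\<in>I. \<Sum>g\<in>A. cnj (x i) * N g i j * x j)"
    by (intro sum.cong refl) (rule sum.swap)
  finally show ?thesis
    unfolding qform_def by (simp add: sum_distrib_left sum_distrib_right)
qed

lemma qform_rank_one:
  "qform I x (\<lambda>i j. w i * cnj (w j)) = of_real ((cmod (\<Sum>i\<in>I. cnj (x i) * w i))\<^sup>2)"
proof -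
  have "qform I x (\<lambda>i j. w i * cnj (w j))
      = (\<Sum>i\<in>I. cnj (x i) * w i) * cnj (\<Sum>i\<in>I. cnj (x i) * w i)"
    unfolding qform_def cnj_sum sum_product by (intro sum.cong refl) (simp add: mult_ac)
  then show ?thesis
    by (simp only: complex_norm_square)
qed

lemma qform_divide: "qform I x (\<lambda>i j. N i j / c) = qform I x N / c"
  unfolding qform_def by (simp add: sum_divide_distrib)

lemma characters_cmod: "\<mu> \<in> characters G \<Longrightarrow> x \<in> carrier G \<Longrightarrow> cmod (\<mu> x) = 1"
  by (simp add: characters_def)

lemma characters_mult:
  "\<mu> \<in> characters G \<Longrightarrow> x \<in> carrier G \<Longrightarrow> y \<in> carrier G \<Longrightarrow> \<mu> (x \<otimes>\<^bsub>G\<^esub> y) = \<mu> x * \<mu> y"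
  by (simp add: characters_def)

lemma characters_outside: "\<mu> \<in> characters G \<Longrightarrow> x \<notin> carrier G \<Longrightarrow> \<mu> x = 0"
  by (simp add: characters_def)

lemma characters_cnj_mult_self:
  "\<mu> \<in> characters G \<Longrightarrow> x \<in> carrier G \<Longrightarrow> cnj (\<mu> x) * \<mu> x = 1"
  by (simp add: characters_cmod cnj_mult_self_eq_1)

lemma characters_orthogonal:
  assumes "group G" "finite (carrier G)" "\<mu> \<in> characters G" "\<nu> \<in> characters G"
  shows "(\<Sum>g\<in>carrier G. \<mu> g * cnj (\<nu> g)) = (if \<mu> = \<nu> then of_nat (card (carrier G)) else 0)"
proof (cases "\<mu> = \<nu>")
  case True
  then show ?thesis
    using characters_cnj_mult_self[OF assms(4)] by (simp add: mult.commute)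
next
  case False
  interpret group G by fact
  obtain h where "\<mu> h \<noteq> \<nu> h"
    using False by auto
  then have h: "h \<in> carrier G"
    using characters_outside[OF assms(3)] characters_outside[OF assms(4)] by metis
  define \<chi> where "\<chi> g = \<mu> g * cnj (\<nu> g)" for g
  have "\<chi> h \<noteq> 1"
  proof
    assume "\<chi> h = 1"
    then have "\<mu> h * (cnj (\<nu> h) * \<nu> h) = \<nu> h"
      by (simp add: \<chi>_def mult.assoc [symmetric])
    then show False
      using \<open>\<mu> h \<noteq> \<nu> h\<close> characters_cnj_mult_self[OF assms(4) h] by simp
  qed
  have "bij_betw (\<lambda>g. h \<otimes>\<^bsub>G\<^esub> g) (carrier G) (carrier G)"
    by (rule bij_betw_byWitness[where f' = "\<lambda>g. inv\<^bsub>G\<^esub> h \<otimes>\<^bsub>G\<^esub> g"])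
      (auto simp: h m_assoc [symmetric])
  then have "(\<Sum>g\<in>carrier G. \<chi> g) = (\<Sum>g\<in>carrier G. \<chi> (h \<otimes>\<^bsub>G\<^esub> g))"
    by (simp add: sum.reindex_bij_betw)
  also have "\<dots> = \<chi> h * (\<Sum>g\<in>carrier G. \<chi> g)"
    using characters_mult[OF assms(3) h] characters_mult[OF assms(4) h]
    by (simp add: \<chi>_def sum_distrib_left mult_ac)
  finally have "(1 - \<chi> h) * (\<Sum>g\<in>carrier G. \<chi> g) = 0"
    by (simp add: algebra_simps)
  then show ?thesis
    using False \<open>\<chi> h \<noteq> 1\<close> by (simp add: \<chi>_def)
qed

lemma balanced_partition:
  fixes r :: "'a \<Rightarrow> real"
  assumes "finite J" "\<forall>j\<in>J. 0 \<le> r j \<and> r j \<le> b" "0 \<le> b"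
  shows "\<exists>A\<subseteq>J. \<bar>sum r A - sum r (J - A)\<bar> \<le> b"
  using assms
proof (induction J rule: finite_induct)
  case empty
  then show ?case
    by auto
next
  case (insert x F)
  then obtain A where A: "A \<subseteq> F" "\<bar>sum r A - sum r (F - A)\<bar> \<le> b"
    by auto
  have "finite A" "x \<notin> A"
    using A(1) insert(1,2) finite_subset by auto
  show ?case
  proof (cases "sum r A \<ge> sum r (F - A)")
    case True
    have "insert x F - A = insert x (F - A)"
      using \<open>x \<notin> A\<close> by auto
    then show ?thesis
      using A True insert(1,2,4) by (intro exI[of _ A]) auto
  next
    case False
    have "insert x F - insert x A = F - A"
      using insert(2) by auto
    then show ?thesis
      using A False insert(4) \<open>finite A\<close> \<open>x \<notin> A\<close> by (intro exI[of _ "insert x A"]) auto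
  qed
qed

lemma exists_unit_cmod_add_eq:
  fixes P Q r :: real
  assumes "0 \<le> P" "0 \<le> Q" "\<bar>P - Q\<bar> \<le> r" "r \<le> P + Q"
  shows "\<exists>z. cmod z = 1 \<and> cmod (of_real P + z * of_real Q) = r"
proof -
  define f where "f t = cmod (of_real P + cis t * of_real Q)" for t
  have "f pi = \<bar>P - Q\<bar>" "f 0 = P + Q"
    using assms(1,2) by (simp_all add: f_def flip: of_real_diff of_real_add)
  moreover have "continuous_on {0..pi} f"
    unfolding f_def by (intro continuous_intros)
  ultimately obtain t where "f t = r"
    using IVT2'[of f pi r 0] assms(3,4) by auto
  then show ?thesis
    by (intro exI[of _ "cis t"]) (simp add: f_def)
qed

lemma exists_unit_weights_sum_eq_0:
  fixes r :: "'a \<Rightarrow> real"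
  assumes "finite I" "i0 \<in> I" "\<forall>i\<in>I. 0 \<le> r i \<and> r i \<le> r i0"
    and "r i0 \<le> (\<Sum>i\<in>I - {i0}. r i)"
  shows "\<exists>c. (\<forall>i\<in>I. cmod (c i) = 1) \<and> (\<Sum>i\<in>I. c i * of_real (r i)) = 0"
proof -
  define J where "J = I - {i0}"
  have "finite J"
    using assms(1) by (simp add: J_def)
  \<comment> \<open>Split the other sides into two groups, of total lengths P and Q,
    that form a triangle with r i0.\<close>
  obtain A where A: "A \<subseteq> J" "\<bar>sum r A - sum r (J - A)\<bar> \<le> r i0"
    using balanced_partition[OF \<open>finite J\<close>, of r "r i0"] assms(2,3) by (auto simp: J_def)
  define P where "P = sum r A"
  define Q where "Q = sum r (J - A)"
  have "P + Q = sum r J" "0 \<le> P" "0 \<le> Q"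
    using sum.subset_diff[OF A(1) \<open>finite J\<close>, of r] A(1) assms(3)
    by (auto simp: P_def Q_def J_def intro!: sum_nonneg)
  then obtain z where z: "cmod z = 1" "cmod (of_real P + z * of_real Q) = r i0"
    using exists_unit_cmod_add_eq[of P Q "r i0"] A(2) assms(4) by (auto simp: P_def Q_def J_def)
  show ?thesis
  proof (cases "r i0 = 0")
    case True
    then have "\<forall>i\<in>I. r i = 0"
      using assms(3) by force
    then show ?thesis
      by (intro exI[of _ "\<lambda>_. 1"]) simp
  next
    case False
    define w where "w = - (of_real P + z * of_real Q) / of_real (r i0)"
    define c where "c i = (if i = i0 then w else if i \<in> A then 1 else z)" for i
    have "cmod w = 1"
      using z(2) False assms(2,3) by (simp add: w_def norm_divide del: minus_add_distrib)
    then have unit: "\<forall>i\<in>I. cmod (c i) = 1"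
      using z(1) by (simp add: c_def)
    have "(\<Sum>i\<in>I. c i * of_real (r i))
        = c i0 * of_real (r i0) + (\<Sum>i\<in>J - A. c i * of_real (r i))
          + (\<Sum>i\<in>A. c i * of_real (r i))"
      using assms(1,2) sum.subset_diff[OF A(1) \<open>finite J\<close>] by (simp add: J_def sum.remove)
    also have "(\<Sum>i\<in>A. c i * of_real (r i)) = of_real P"
      using A(1) unfolding P_def of_real_sum by (intro sum.cong) (auto simp: c_def J_def)
    also have "(\<Sum>i\<in>J - A. c i * of_real (r i)) = z * of_real Q"
      unfolding Q_def of_real_sum sum_distrib_left by (intro sum.cong) (auto simp: c_def J_def)
    also have "c i0 * of_real (r i0) + z * of_real Q + of_real P = 0"
      using False by (simp add: c_def w_def)
    finally show ?thesis
      using unit by blast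
  qed
qed

(* In the basis v_mu this is the matrix of the operator \<Sum>_g U_g^* M_g U_g. *)
definition twirl ::
  "'g set \<Rightarrow> ('g \<Rightarrow> ('g \<Rightarrow> complex) \<Rightarrow> ('g \<Rightarrow> complex) \<Rightarrow> complex)
    \<Rightarrow> ('g \<Rightarrow> complex) \<Rightarrow> ('g \<Rightarrow> complex) \<Rightarrow> complex" where
  "twirl A M \<mu> \<nu> = (\<Sum>g\<in>A. cnj (\<mu> g) * M g \<mu> \<nu> * \<nu> g)"

lemma qform_twirl: "qform I x (twirl A M) = (\<Sum>g\<in>A. qform I (rep_act g x) (M g))"
  unfolding twirl_def qform_rep_act qform_sum ..

lemma psd_twirl:
  assumes "\<forall>g\<in>A. psd I (M g)"
  shows "psd I (twirl A M)"
  using assms unfolding psd_def qform_twirl by (simp add: sum_nonneg)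

lemma twirl_diag_POVM:
  assumes "is_POVM I A M" "\<mu> \<in> I" "\<forall>g\<in>A. cmod (\<mu> g) = 1"
  shows "twirl A M \<mu> \<mu> = 1"
proof -
  have "cnj (\<mu> g) * M g \<mu> \<mu> * \<mu> g = M g \<mu> \<mu> * (cnj (\<mu> g) * \<mu> g)" for g
    by (simp add: mult_ac)
  then have "twirl A M \<mu> \<mu> = (\<Sum>g\<in>A. M g \<mu> \<mu>)"
    unfolding twirl_def using assms(3) by (intro sum.cong) (auto simp: cnj_mult_self_eq_1)
  then show ?thesis
    using assms(1,2) by (simp add: is_POVM_def)
qed

lemma POVM_exclusion_imp_le_sum_others:
  assumes "finite I" "\<mu>0 \<in> I" "\<forall>\<mu>\<in>I. \<forall>g\<in>A. cmod (\<mu> g) = 1"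
    and "is_POVM I A M" "\<forall>g\<in>A. qform I (rep_act g a) (M g) = 0"
  shows "cmod (a \<mu>0) \<le> (\<Sum>\<mu>\<in>I - {\<mu>0}. cmod (a \<mu>))"
proof -
  define N where "N = twirl A M"
  have psd: "psd I N"
    using assms(4) by (simp add: N_def psd_twirl is_POVM_def)
  have diag: "N \<mu> \<mu> = 1" if "\<mu> \<in> I" for \<mu>
    using twirl_diag_POVM[OF assms(4) that] assms(3) that by (simp add: N_def)
  have "qform I a N = 0"
    using assms(5) by (simp add: N_def qform_twirl)
  then have "(\<Sum>\<mu>\<in>I. N \<mu>0 \<mu> * a \<mu>) = 0"
    by (rule psd_qform_eq_0_imp_mult_eq_0[OF psd assms(1,2)])
  then have "a \<mu>0 = - (\<Sum>\<mu>\<in>I - {\<mu>0}. N \<mu>0 \<mu> * a \<mu>)"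
    using assms(1,2) diag[OF assms(2)] by (simp add: sum.remove eq_neg_iff_add_eq_0)
  then have "cmod (a \<mu>0) = cmod (\<Sum>\<mu>\<in>I - {\<mu>0}. N \<mu>0 \<mu> * a \<mu>)"
    by (simp only: norm_minus_cancel)
  also have "\<dots> \<le> (\<Sum>\<mu>\<in>I - {\<mu>0}. cmod (N \<mu>0 \<mu>) * cmod (a \<mu>))"
    unfolding norm_mult [symmetric] by (rule norm_sum)
  also have "\<dots> \<le> (\<Sum>\<mu>\<in>I - {\<mu>0}. cmod (a \<mu>))"
    using psd_unit_diag_cmod_le_1[OF psd assms(1,2)] diag assms(2)
    by (intro sum_mono mult_left_le_one_le) auto
  finally show ?thesis .
qed

(* The matrix of M_g = |U_g phi><U_g phi| / |G|, where phi has coordinates \<phi> mu. *)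
definition orbit_POVM ::
  "('g, 'b) monoid_scheme \<Rightarrow> (('g \<Rightarrow> complex) \<Rightarrow> complex)
    \<Rightarrow> 'g \<Rightarrow> ('g \<Rightarrow> complex) \<Rightarrow> ('g \<Rightarrow> complex) \<Rightarrow> complex" where
  "orbit_POVM G \<phi> g \<mu> \<nu> = \<mu> g * \<phi> \<mu> * cnj (\<nu> g * \<phi> \<nu>) / of_nat (card (carrier G))"

lemma qform_rep_act_orbit_POVM:
  assumes "g \<in> carrier G"
  shows "qform (characters G) (rep_act g a) (orbit_POVM G \<phi> g)
    = of_real ((cmod (\<Sum>\<mu>\<in>characters G. cnj (a \<mu>) * \<phi> \<mu>))\<^sup>2) / of_nat (card (carrier G))"
proof -
  define w where "w \<mu> = \<mu> g * \<phi> \<mu>" for \<mu> :: "'a \<Rightarrow> complex"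
  have "(\<Sum>\<mu>\<in>characters G. cnj (rep_act g a \<mu>) * w \<mu>)
      = (\<Sum>\<mu>\<in>characters G. cnj (a \<mu>) * \<phi> \<mu>)"
    using characters_cnj_mult_self[OF _ assms]
    by (intro sum.cong) (auto simp: w_def rep_act_def mult_ac)
  moreover have "orbit_POVM G \<phi> g = (\<lambda>\<mu> \<nu>. w \<mu> * cnj (w \<nu>) / of_nat (card (carrier G)))"
    by (simp add: fun_eq_iff orbit_POVM_def w_def)
  ultimately show ?thesis
    by (simp add: qform_divide qform_rank_one)
qed

lemma is_POVM_orbit_POVM:
  assumes "group G" "finite (carrier G)" "\<forall>\<mu>\<in>characters G. cmod (\<phi> \<mu>) = 1"
  shows "is_POVM (characters G) (carrier G) (orbit_POVM G \<phi>)"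
  unfolding is_POVM_def
proof safe
  fix g
  show "psd (characters G) (orbit_POVM G \<phi> g)"
    unfolding psd_def orbit_POVM_def qform_divide
    using qform_rank_one[of _ _ "\<lambda>\<mu>. \<mu> g * \<phi> \<mu>"] by simp
next
  fix \<mu> \<nu>
  assume "\<mu> \<in> characters G" "\<nu> \<in> characters G"
  moreover have "card (carrier G) \<noteq> 0"
    using assms(2) monoid.one_closed[OF group.is_monoid[OF assms(1)]]
    by (auto simp: card_eq_0_iff)
  moreover have "(\<Sum>g\<in>carrier G. orbit_POVM G \<phi> g \<mu> \<nu>)
      = \<phi> \<mu> * cnj (\<phi> \<nu>) * (\<Sum>g\<in>carrier G. \<mu> g * cnj (\<nu> g)) / of_nat (card (carrier G))"
    by (simp add: orbit_POVM_def sum_divide_distrib sum_distrib_left mult_ac)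
  ultimately show "(\<Sum>g\<in>carrier G. orbit_POVM G \<phi> g \<mu> \<nu>) = (if \<mu> = \<nu> then 1 else 0)"
    using characters_orthogonal[OF assms(1,2)] assms(3)
    by (simp flip: complex_norm_square)
qed

lemma le_sum_others_imp_POVM_exclusion:
  assumes "group G" "finite (carrier G)" "finite (characters G)" "\<mu>0 \<in> characters G"
    and "\<forall>\<mu>\<in>characters G. cmod (a \<mu>) \<le> cmod (a \<mu>0)"
    and "cmod (a \<mu>0) \<le> (\<Sum>\<mu>\<in>characters G - {\<mu>0}. cmod (a \<mu>))"
  shows "\<exists>M. is_POVM (characters G) (carrier G) M
    \<and> (\<forall>g\<in>carrier G. qform (characters G) (rep_act g a) (M g) = 0)"
proof -
  obtain c where c: "\<forall>\<mu>\<in>characters G. cmod (c \<mu>) = 1"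
    "(\<Sum>\<mu>\<in>characters G. c \<mu> * of_real (cmod (a \<mu>))) = 0"
    using exists_unit_weights_sum_eq_0[OF assms(3,4), of "\<lambda>\<mu>. cmod (a \<mu>)"] assms(5,6)
    by auto
  have "\<forall>\<mu>. \<exists>u. cmod u = 1 \<and> cnj (a \<mu>) * u = of_real (cmod (a \<mu>))"
    using exists_unit_phase by blast
  then obtain u where u: "\<forall>\<mu>. cmod (u \<mu>) = 1 \<and> cnj (a \<mu>) * u \<mu> = of_real (cmod (a \<mu>))"
    by metis
  define \<phi> where "\<phi> \<mu> = c \<mu> * u \<mu>" for \<mu>
  have "\<forall>\<mu>\<in>characters G. cmod (\<phi> \<mu>) = 1"
    using c(1) u by (simp add: \<phi>_def norm_mult)
  moreover have "(\<Sum>\<mu>\<in>characters G. cnj (a \<mu>) * \<phi> \<mu>) = 0"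
    using c(2) u by (simp add: \<phi>_def mult.left_commute)
  ultimately show ?thesis
    using is_POVM_orbit_POVM[OF assms(1,2)] qform_rep_act_orbit_POVM by fastforce
qed

theorem proposition1:
  fixes G :: "('g, 'b) monoid_scheme"
    and a :: "('g \<Rightarrow> complex) \<Rightarrow> complex"
    and \<mu>0 :: "'g \<Rightarrow> complex"
  assumes "comm_group G"
    and "finite (carrier G)"
    and "(\<Sum>\<mu>\<in>characters G. (cmod (a \<mu>))\<^sup>2) = 1"
    and "\<mu>0 \<in> characters G"
    and "\<forall>\<mu>\<in>characters G. cmod (a \<mu>0) \<ge> cmod (a \<mu>)"
  shows "(\<exists>M. is_POVM (characters G) (carrier G) M
              \<and> (\<forall>g\<in>carrier G. qform (characters G) (rep_act g a) (M g) = 0))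
         \<longleftrightarrow> cmod (a \<mu>0) \<le> (\<Sum>\<mu>\<in>characters G - {\<mu>0}. cmod (a \<mu>))"
proof -
  have group: "group G"
    using assms(1) by (rule comm_group.axioms(2))
  have unit: "\<forall>\<mu>\<in>characters G. \<forall>g\<in>carrier G. cmod (\<mu> g) = 1"
    by (simp add: characters_cmod)
  \<comment> \<open>A sum over an infinite set is 0, so the normalisation of a forces finiteness.\<close>
  have finite: "finite (characters G)"
    using assms(3) by (rule contrapos_pp) simp
  show ?thesis
    using POVM_exclusion_imp_le_sum_others[OF finite assms(4) unit]
      le_sum_others_imp_POVM_exclusion[OF group assms(2) finite assms(4)] assms(5)
    by blast
qed

end
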